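(* Let $F$ be an augmentation of a tree $T$. Then $\mathrm{ex}(n,F^3)\le 3(|T|+1)n^2$ for all sufficiently large $n$.
   Context: $|T|$ is the number of edges of $T$. A graph $F$ is an augmentation of a tree $T$ if $F$ is obtained from $T$ by adding one new edge (whose endpoints need not lie in $V(T)$). The expansion $F^3$ is the $3$-graph obtained from $F$ by adding to each edge a new vertex, distinct edges receiving distinct new vertices. $\mathrm{ex}(n,F^3)$ is the maximum number of edges in an $n$-vertex $3$-graph containing no copy of $F^3$. *)

theory Defs
  imports Main
begin

definition graph_on :: "'a set \<Rightarrow> 'a set set \<Rightarrow> bool" where
  "graph_on V E \<longleftrightarrow> finite V \<and> E \<subseteq> {e. e \<subseteq> V \<and> card e = 2}"

definition walk :: "'a set set \<Rightarrow> 'a list \<Rightarrow> bool" where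
  "walk E xs \<longleftrightarrow> (\<forall>i < length xs - 1. {xs ! i, xs ! (i + 1)} \<in> E)"

definition connected_graph :: "'a set \<Rightarrow> 'a set set \<Rightarrow> bool" where
  "connected_graph V E \<longleftrightarrow>
     (\<forall>u\<in>V. \<forall>v\<in>V. \<exists>xs. xs \<noteq> [] \<and> hd xs = u \<and> last xs = v \<and> walk E xs)"

definition has_cycle :: "'a set set \<Rightarrow> bool" where
  "has_cycle E \<longleftrightarrow>
     (\<exists>xs. length xs \<ge> 3 \<and> distinct xs \<and> walk E xs \<and> {last xs, hd xs} \<in> E)"

definition is_tree :: "'a set \<Rightarrow> 'a set set \<Rightarrow> bool" where
  "is_tree V E \<longleftrightarrow> graph_on V E \<and> V \<noteq> {} \<and> connected_graph V E \<and> \<not> has_cycle E"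

definition is_augmentation ::
  "'a set \<Rightarrow> 'a set set \<Rightarrow> 'a set \<Rightarrow> 'a set set \<Rightarrow> bool" where
  "is_augmentation V E VF EF \<longleftrightarrow>
     (\<exists>e. card e = 2 \<and> e \<notin> E \<and> VF = V \<union> e \<and> EF = insert e E)"

text \<open>The 3-expansion: each edge e receives its own new vertex Inr e.\<close>
definition exp3_vertices :: "'a set \<Rightarrow> 'a set set \<Rightarrow> ('a + 'a set) set" where
  "exp3_vertices V E = Inl ` V \<union> Inr ` E"

definition exp3_edges :: "'a set set \<Rightarrow> ('a + 'a set) set set" where
  "exp3_edges E = (\<lambda>e. insert (Inr e) (Inl ` e)) ` E"

definition contains_copy :: "'b set \<Rightarrow> 'b set set \<Rightarrow> 'c set \<Rightarrow> 'c set set \<Rightarrow> bool" where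
  "contains_copy VH H VG G \<longleftrightarrow>
     (\<exists>f. inj_on f VG \<and> f ` VG \<subseteq> VH \<and> (\<forall>g\<in>G. f ` g \<in> H))"

definition three_graph_on :: "nat \<Rightarrow> nat set set \<Rightarrow> bool" where
  "three_graph_on n H \<longleftrightarrow> H \<subseteq> {g. g \<subseteq> {..<n} \<and> card g = 3}"

definition ex3 :: "nat \<Rightarrow> 'c set \<Rightarrow> 'c set set \<Rightarrow> nat" where
  "ex3 n VG G = Max {card H | H. three_graph_on n H \<and> \<not> contains_copy {..<n} H VG G}"

end

theory Submission
  imports Defs
begin

text \<open>Let m = 6 (|T| + 1), which bounds |V(F)| + |E(F)|. Repeatedly deleting all edges
  through a pair of codegree less than m removes at most m (n choose 2) <= 3 (|T| + 1) n^2
  edges, so a denser 3-graph H keeps a nonempty subgraph in which every pair inside an edge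
  lies in at least m edges. Fix one of its edges xyz and let b be an endpoint of the new edge
  of F, so that F - b is a forest. Peeling off vertices with at most one neighbour, embed
  F - b greedily into the shadow so that every image also forms a shadow pair with y, and
  send b to y. Now every edge of F lands on a pair of codegree at least m, which leaves room
  to choose the distinct expansion vertices greedily.\<close>

section \<open>Paths and cycles\<close>

lemma walk_snoc:
  assumes "walk E xs" "xs \<noteq> []" "{last xs, w} \<in> E"
  shows "walk E (xs @ [w])"
  unfolding walk_def
proof (intro allI impI)
  fix i assume i: "i < length (xs @ [w]) - 1"
  show "{(xs @ [w]) ! i, (xs @ [w]) ! (i + 1)} \<in> E"
  proof (cases "i < length xs - 1")
    case True
    then have "i + 1 < length xs" by simp
    then show ?thesis using assms(1) True by (simp add: walk_def nth_append)
  next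
    case False
    then have "i = length xs - 1" using i by simp
    then show ?thesis using assms(2,3) by (simp add: nth_append last_conv_nth)
  qed
qed

lemma walk_drop: "walk E xs \<Longrightarrow> walk E (drop j xs)"
  unfolding walk_def by (auto simp: add.assoc)

lemma hd_in_Union_if_walk:
  assumes "walk E xs" "xs \<noteq> []" "hd xs \<noteq> last xs"
  shows "hd xs \<in> \<Union>E"
proof -
  have "0 < length xs - 1"
    using assms(2,3) by (metis hd_conv_nth last_conv_nth diff_is_0_eq' length_greater_0_conv
        le_neq_implies_less less_one not_gr_zero)
  then have "{xs ! 0, xs ! 1} \<in> E" using assms(1) unfolding walk_def by auto
  then show ?thesis using assms(2) by (auto simp: hd_conv_nth)
qed

lemma has_cycle_if_last_adjacent:
  assumes "walk E xs" "distinct xs" "j + 3 \<le> length xs" "{last xs, xs ! j} \<in> E"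
  shows "has_cycle E"
proof -
  have "length (drop j xs) \<ge> 3" "distinct (drop j xs)" "walk E (drop j xs)"
    using assms(1-3) walk_drop by auto
  moreover have "last (drop j xs) = last xs" "hd (drop j xs) = xs ! j"
    using assms(3) by (auto simp: hd_drop_conv_nth)
  ultimately show ?thesis
    unfolding has_cycle_def using assms(4) by (intro exI[of _ "drop j xs"]) simp
qed

lemma ex_longest_path:
  assumes "finite U" "U \<noteq> {}"
  obtains xs where "xs \<noteq> []" "distinct xs" "set xs \<subseteq> U" "walk E xs"
    "\<And>ys. distinct ys \<Longrightarrow> set ys \<subseteq> U \<Longrightarrow> walk E ys \<Longrightarrow> length ys \<le> length xs"
proof -
  define P where "P xs \<longleftrightarrow> distinct xs \<and> set xs \<subseteq> U \<and> walk E xs" for xs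
  obtain u where "u \<in> U" using assms(2) by auto
  then have "P [u]" by (simp add: P_def walk_def)
  moreover have "\<forall>ys. P ys \<longrightarrow> length ys < card U + 1"
    by (metis P_def assms(1) card_mono distinct_card less_Suc_eq_le Suc_eq_plus1)
  ultimately obtain xs where "P xs" "\<forall>ys. P ys \<longrightarrow> length ys \<le> length xs"
    using ex_has_greatest_nat[of P "[u]" length] by blast
  moreover from this have "xs \<noteq> []" using \<open>P [u]\<close> by force
  ultimately show thesis using that unfolding P_def by blast
qed

text \<open>The last vertex of a longest path has all its neighbours on the path, so a second
  neighbour would close a cycle.\<close>
lemma acyclic_ex_vertex_le_one_neighbour:
  assumes acyclic: "\<not> has_cycle E" and E2: "\<forall>g\<in>E. card g = 2" and "finite U" "U \<noteq> {}"
  shows "\<exists>v\<in>U. \<forall>w1\<in>U. \<forall>w2\<in>U. {v, w1} \<in> E \<longrightarrow> {v, w2} \<in> E \<longrightarrow> w1 = w2"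
proof -
  obtain xs where xs: "xs \<noteq> []" "distinct xs" "set xs \<subseteq> U" "walk E xs"
    and longest: "\<And>ys. distinct ys \<Longrightarrow> set ys \<subseteq> U \<Longrightarrow> walk E ys \<Longrightarrow> length ys \<le> length xs"
    using ex_longest_path[OF assms(3,4)] by blast
  define l where "l = last xs"
  have "l \<in> U" using xs(1,3) l_def by auto
  have on_path: "\<exists>j < length xs - 1. xs ! j = w" if "w \<in> U" "{l, w} \<in> E" for w
  proof -
    have "w \<in> set xs"
    proof (rule ccontr)
      assume "w \<notin> set xs"
      then have "length (xs @ [w]) \<le> length xs"
        using that xs walk_snoc[of E xs w] l_def by (intro longest) auto
      then show False by simp
    qed
    then obtain j where j: "j < length xs" "xs ! j = w" by (auto simp: in_set_conv_nth)
    have "w \<noteq> l" using that(2) E2 by fastforce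
    then have "j \<noteq> length xs - 1" using j xs(1) l_def by (auto simp: last_conv_nth)
    then have "j < length xs - 1" using j(1) by linarith
    then show ?thesis using j(2) by blast
  qed
  have "w1 = w2" if w: "w1 \<in> U" "w2 \<in> U" "{l, w1} \<in> E" "{l, w2} \<in> E" for w1 w2
  proof (rule ccontr)
    assume "w1 \<noteq> w2"
    obtain j1 j2 where j: "j1 < length xs - 1" "xs ! j1 = w1" "j2 < length xs - 1" "xs ! j2 = w2"
      using on_path w by metis
    then have "j1 \<noteq> j2" using \<open>w1 \<noteq> w2\<close> by blast
    obtain j where "j + 3 \<le> length xs" "xs ! j \<in> {w1, w2}"
    proof (cases "j1 < j2")
      case True
      then show ?thesis using that[of j1] j by simp
    next
      case False
      then show ?thesis using that[of j2] j \<open>j1 \<noteq> j2\<close> by simp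
    qed
    then show False
      using has_cycle_if_last_adjacent[of E xs j] xs(2,4) w(3,4) l_def acyclic by auto
  qed
  then show ?thesis using \<open>l \<in> U\<close> by blast
qed

lemma connected_graph_card_le:
  assumes "graph_on V E" "connected_graph V E"
  shows "card V \<le> 2 * card E + 1"
proof (cases "card V \<le> 1")
  case False
  have V: "finite V" and E: "\<forall>e\<in>E. e \<subseteq> V \<and> card e = 2"
    using assms(1) unfolding graph_on_def by auto
  have "V \<subseteq> \<Union>E"
  proof
    fix u assume "u \<in> V"
    have "V \<noteq> {u}" using False by auto
    then obtain v where "v \<in> V" "v \<noteq> u" using \<open>u \<in> V\<close> by blast
    then obtain xs where "xs \<noteq> []" "hd xs = u" "last xs = v" "walk E xs"
      using assms(2) \<open>u \<in> V\<close> unfolding connected_graph_def by blast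
    then show "u \<in> \<Union>E" using hd_in_Union_if_walk \<open>v \<noteq> u\<close> by metis
  qed
  moreover have "finite (\<Union>E)"
    using E V by (meson Sup_least finite_subset)
  ultimately have "card V \<le> card (\<Union>E)" by (rule card_mono[rotated])
  also have "\<dots> \<le> sum card E" by (rule card_Union_le_sum_card)
  also have "\<dots> = 2 * card E" using E by simp
  finally show ?thesis by simp
qed simp

lemma ex_notin_if_card_less: "finite B \<Longrightarrow> card B < card C \<Longrightarrow> \<exists>z\<in>C. z \<notin> B"
  by (meson card_mono leD subsetI)

lemma ex_inj_choice_avoiding:
  assumes "finite I" "finite B" "\<forall>i\<in>I. card I + card B \<le> card (A i)"
  shows "\<exists>c. inj_on c I \<and> (\<forall>i\<in>I. c i \<in> A i \<and> c i \<notin> B)"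
  using assms
proof (induction I rule: finite_induct)
  case empty
  then show ?case by simp
next
  case (insert i I)
  then have "\<forall>j\<in>I. card I + card B \<le> card (A j)" by auto
  then obtain c where c: "inj_on c I" "\<forall>j\<in>I. c j \<in> A j \<and> c j \<notin> B"
    using insert.IH insert.prems(1) by blast
  have "card (B \<union> c ` I) \<le> card B + card I"
    using card_Un_le[of B "c ` I"] card_image_le[OF insert.hyps(1), of c] by linarith
  also have "\<dots> < card (A i)" using insert by auto
  finally have "\<exists>z\<in>A i. z \<notin> B \<union> c ` I"
    using insert.hyps(1) insert.prems(1) by (intro ex_notin_if_card_less) auto
  then obtain z where z: "z \<in> A i" "z \<notin> B \<union> c ` I" by blast
  show ?case
  proof (intro exI[of _ "c(i := z)"] conjI)
    show "inj_on (c(i := z)) (insert i I)"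
      using c(1) z insert.hyps(2) by (auto simp: inj_on_def)
    show "\<forall>j\<in>insert i I. (c(i := z)) j \<in> A j \<and> (c(i := z)) j \<notin> B"
      using c z insert.hyps(2) by auto
  qed
qed

lemma inj_on_case_sum:
  assumes "inj_on f A" "inj_on g B" "f ` A \<inter> g ` B = {}"
  shows "inj_on (case_sum f g) (Inl ` A \<union> Inr ` B)"
proof (rule inj_onI)
  fix s t assume "s \<in> Inl ` A \<union> Inr ` B" "t \<in> Inl ` A \<union> Inr ` B"
    and "case_sum f g s = case_sum f g t"
  then show "s = t"
    using assms by (auto simp: inj_on_eq_iff) (metis disjoint_iff imageI)+
qed

section \<open>Links, shadows and full 3-graphs\<close>

definition link :: "'a set set \<Rightarrow> 'a set \<Rightarrow> 'a set" where
  "link H p = {z. insert z p \<in> H}"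

definition shadow :: "'a set set \<Rightarrow> 'a set set" where
  "shadow H = {p. card p = 2 \<and> (\<exists>h\<in>H. p \<subseteq> h)}"

definition full :: "nat \<Rightarrow> 'a set set \<Rightarrow> bool" where
  "full m H \<longleftrightarrow> (\<forall>h\<in>H. \<forall>p. p \<subseteq> h \<longrightarrow> card p = 2 \<longrightarrow> m \<le> card (link H p))"

lemma mem_link_pair: "z \<in> link H {x, y} \<longleftrightarrow> {x, y, z} \<in> H"
  by (auto simp: link_def insert_commute)

lemma link_subset_Union: "link H p \<subseteq> \<Union>H"
  by (auto simp: link_def)

lemma mem_Union_if_link_ne: "link H {a, b} \<noteq> {} \<Longrightarrow> a \<in> \<Union>H"
  unfolding link_def by blast

lemma finite_Union_if_card_3: "finite H \<Longrightarrow> \<forall>h\<in>H. card h = 3 \<Longrightarrow> finite (\<Union>H)"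
  by (intro finite_Union) (auto intro: card_ge_0_finite)

lemma full_link_card:
  assumes "full m H" "card p = 2" "link H p \<noteq> {}"
  shows "m \<le> card (link H p)"
  using assms unfolding full_def link_def by blast

lemma ex_link_vertex_avoiding:
  assumes "full m H" "a \<noteq> y" "link H {a, y} \<noteq> {}" "finite S" "card S < m"
  shows "\<exists>z. {a, y, z} \<in> H \<and> z \<notin> S"
proof -
  have "card S < card (link H {a, y})"
    using full_link_card[OF assms(1) _ assms(3)] assms(2,5) by simp
  then obtain z where "z \<in> link H {a, y}" "z \<notin> S"
    using ex_notin_if_card_less[OF assms(4)] by blast
  then show ?thesis by (auto simp: mem_link_pair)
qed

lemma card_edges_containing_le_link:
  assumes "finite H" "\<forall>h\<in>H. card h = 3" "card p = 2"
  shows "card {h\<in>H. p \<subseteq> h} \<le> card (link H p)"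
proof -
  have "{h\<in>H. p \<subseteq> h} \<subseteq> (\<lambda>z. insert z p) ` link H p"
  proof
    fix h assume h: "h \<in> {h\<in>H. p \<subseteq> h}"
    moreover have "finite p" using assms(3) card.infinite by fastforce
    ultimately have "card (h - p) = 1"
      using assms(2,3) by (simp add: card_Diff_subset)
    then obtain z where "h - p = {z}" by (meson card_1_singletonE)
    then have "h = insert z p" using h by auto
    then show "h \<in> (\<lambda>z. insert z p) ` link H p" using h by (auto simp: link_def)
  qed
  moreover have "finite (link H p)"
    using finite_Union_if_card_3[OF assms(1,2)] link_subset_Union finite_subset by metis
  ultimately show ?thesis
    by (meson card_image_le card_mono finite_imageI order_trans)
qed

lemma finite_shadow:
  assumes "finite H" "\<forall>h\<in>H. card h = 3"
  shows "finite (shadow H)"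
proof -
  have "shadow H \<subseteq> Pow (\<Union>H)" by (auto simp: shadow_def)
  then show ?thesis using finite_Union_if_card_3[OF assms] by (simp add: finite_subset)
qed

text \<open>Deleting all edges through a pair of codegree less than m removes at most m edges
  and at least one pair of the shadow.\<close>
lemma ex_full_subgraph:
  assumes "finite H" "\<forall>h\<in>H. card h = 3"
  shows "\<exists>H'\<subseteq>H. full m H' \<and> card H \<le> card H' + m * card (shadow H)"
  using assms
proof (induction "card H" arbitrary: H rule: less_induct)
  case less
  show ?case
  proof (cases "full m H")
    case False
    then obtain h p where hp: "h \<in> H" "p \<subseteq> h" "card p = 2" "card (link H p) < m"
      unfolding full_def by auto
    define R where "R = {h\<in>H. p \<subseteq> h}"
    have "finite R" "R \<subseteq> H" using less.prems(1) by (auto simp: R_def)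
    have "card R \<le> m"
      using card_edges_containing_le_link[OF less.prems hp(3)] hp(4) R_def by simp
    have "h \<in> R" using hp by (simp add: R_def)
    then have "card R > 0" using \<open>finite R\<close> card_gt_0_iff by blast
    moreover have card_H: "card H = card (H - R) + card R"
      using \<open>finite R\<close> \<open>R \<subseteq> H\<close> less.prems(1) by (simp add: card_Diff_subset card_mono)
    ultimately have "card (H - R) < card H" by simp
    then have "\<exists>H'\<subseteq>H - R. full m H' \<and> card (H - R) \<le> card H' + m * card (shadow (H - R))"
      using less.hyps less.prems by simp
    then obtain H' where H': "H' \<subseteq> H - R" "full m H'"
      "card (H - R) \<le> card H' + m * card (shadow (H - R))"
      by blast
    have "shadow (H - R) \<subseteq> shadow H - {p}" "p \<in> shadow H"
      using hp by (auto simp: shadow_def R_def)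
    then have "shadow (H - R) \<subset> shadow H" by blast
    then have "card (shadow (H - R)) < card (shadow H)"
      using finite_shadow[OF less.prems] by (rule psubset_card_mono[rotated])
    then have "m * card (shadow (H - R)) + m \<le> m * card (shadow H)"
      by (metis Suc_leI add.commute mult_Suc_right mult_le_mono2)
    then show ?thesis using H' card_H \<open>card R \<le> m\<close> by (intro exI[of _ H']) auto
  qed auto
qed

lemma card_shadow_le:
  assumes "three_graph_on n H"
  shows "card (shadow H) \<le> n choose 2"
proof -
  have "shadow H \<subseteq> {p. p \<subseteq> {..<n} \<and> card p = 2}"
    using assms unfolding shadow_def three_graph_on_def by auto
  then have "card (shadow H) \<le> card {p. p \<subseteq> {..<n} \<and> card p = 2}"
    by (intro card_mono) auto
  also have "\<dots> = n choose 2" using n_subsets[of "{..<n}" 2] by simp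
  finally show ?thesis .
qed

lemma double_choose_two_le: "2 * (n choose 2) \<le> n ^ 2"
proof -
  have "2 * (n choose 2) \<le> n * (n - 1)" unfolding choose_two by simp
  also have "\<dots> \<le> n ^ 2" by (simp add: power2_eq_square)
  finally show ?thesis .
qed

section \<open>Embedding a forest into the shadow\<close>

text \<open>A nonempty link of {a, b} says that ab is an edge of the shadow of H, so a rooted
  shadow embedding maps the graph (U, E) into the shadow, inside the shadow neighbourhood
  of the root y.\<close>
definition rooted_shadow_embedding ::
  "'a set set \<Rightarrow> 'a \<Rightarrow> 'b set set \<Rightarrow> 'b set \<Rightarrow> ('b \<Rightarrow> 'a) \<Rightarrow> bool" where
  "rooted_shadow_embedding H y E U \<phi> \<longleftrightarrow> inj_on \<phi> U \<and>
     (\<forall>u\<in>U. \<phi> u \<noteq> y \<and> link H {\<phi> u, y} \<noteq> {}) \<and>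
     (\<forall>u\<in>U. \<forall>w\<in>U. {u, w} \<in> E \<longrightarrow> link H {\<phi> u, \<phi> w} \<noteq> {})"

lemma rooted_shadow_embedding_fun_upd:
  assumes \<phi>: "rooted_shadow_embedding H y E U \<phi>" and "v \<notin> U" "{v, v} \<notin> E"
    and z: "z \<notin> insert y (\<phi> ` U)" "link H {z, y} \<noteq> {}"
    and z_edge: "\<And>w. w \<in> U \<Longrightarrow> {v, w} \<in> E \<Longrightarrow> link H {z, \<phi> w} \<noteq> {}"
  shows "rooted_shadow_embedding H y E (insert v U) (\<phi>(v := z))"
  unfolding rooted_shadow_embedding_def
proof (intro conjI ballI impI)
  show "inj_on (\<phi>(v := z)) (insert v U)"
    using \<phi> z(1) \<open>v \<notin> U\<close> by (auto simp: rooted_shadow_embedding_def inj_on_insert inj_on_fun_updI)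
next
  fix u assume "u \<in> insert v U"
  then show "(\<phi>(v := z)) u \<noteq> y" "link H {(\<phi>(v := z)) u, y} \<noteq> {}"
    using \<phi> z \<open>v \<notin> U\<close> by (auto simp: rooted_shadow_embedding_def)
next
  fix u w assume u: "u \<in> insert v U" and w: "w \<in> insert v U" and uw: "{u, w} \<in> E"
  then consider "u \<in> U" "w \<in> U" | "u = v" "w \<in> U" | "w = v" "u \<in> U"
    using \<open>{v, v} \<notin> E\<close> by auto
  then show "link H {(\<phi>(v := z)) u, (\<phi>(v := z)) w} \<noteq> {}"
  proof cases
    case 1
    then show ?thesis using \<phi> uw \<open>v \<notin> U\<close> by (auto simp: rooted_shadow_embedding_def)
  next
    case 2
    then show ?thesis using z_edge uw \<open>v \<notin> U\<close> by auto
  next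
    case 3
    then show ?thesis using z_edge[of u] uw \<open>v \<notin> U\<close> by (auto simp: insert_commute)
  qed
qed

text \<open>v is sent to a vertex z in the link of {a, y}, where a is the image of the unique
  neighbour of v in U (or x, if there is none); then zy and za are shadow pairs.\<close>
lemma rooted_shadow_embedding_insert:
  assumes full: "full m H" and xy: "x \<noteq> y" "link H {x, y} \<noteq> {}"
    and \<phi>: "rooted_shadow_embedding H y E U \<phi>"
    and "finite U" "v \<notin> U" "Suc (card U) < m" "{v, v} \<notin> E"
    and one_neighbour: "\<And>w1 w2. w1 \<in> U \<Longrightarrow> w2 \<in> U \<Longrightarrow> {v, w1} \<in> E \<Longrightarrow> {v, w2} \<in> E \<Longrightarrow> w1 = w2"
  shows "\<exists>\<psi>. rooted_shadow_embedding H y E (insert v U) \<psi>"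
proof -
  obtain a where a: "a \<noteq> y" "link H {a, y} \<noteq> {}"
    and a_neighbour: "\<And>w. w \<in> U \<Longrightarrow> {v, w} \<in> E \<Longrightarrow> a = \<phi> w"
  proof (cases "\<exists>w\<in>U. {v, w} \<in> E")
    case True
    then obtain w where w: "w \<in> U" "{v, w} \<in> E" by blast
    have "\<phi> w \<noteq> y" "link H {\<phi> w, y} \<noteq> {}"
      using \<phi> w(1) by (auto simp: rooted_shadow_embedding_def)
    moreover have "\<phi> w = \<phi> w'" if "w' \<in> U" "{v, w'} \<in> E" for w'
      using one_neighbour[OF w(1) that(1) w(2) that(2)] by simp
    ultimately show ?thesis by (rule that)
  next
    case False
    then show ?thesis using that[of x] xy by blast
  qed
  have "card (insert y (\<phi> ` U)) \<le> Suc (card (\<phi> ` U))"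
    by (simp add: card_insert_if \<open>finite U\<close>)
  also have "\<dots> \<le> Suc (card U)" using card_image_le[OF \<open>finite U\<close>] by simp
  finally have "card (insert y (\<phi> ` U)) < m" using \<open>Suc (card U) < m\<close> by linarith
  moreover have "finite (insert y (\<phi> ` U))" using \<open>finite U\<close> by simp
  ultimately obtain z where z: "{a, y, z} \<in> H" "z \<notin> insert y (\<phi> ` U)"
    using ex_link_vertex_avoiding[OF full a] by blast
  have "a \<in> link H {z, y}" using z(1) by (simp add: mem_link_pair insert_commute)
  then have z_root: "link H {z, y} \<noteq> {}" by blast
  have z_edge: "link H {z, \<phi> w} \<noteq> {}" if "w \<in> U" "{v, w} \<in> E" for w
  proof -
    have "y \<in> link H {z, \<phi> w}"
      using z(1) a_neighbour[OF that] by (simp add: mem_link_pair insert_commute)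
    then show ?thesis by blast
  qed
  from rooted_shadow_embedding_fun_upd[OF \<phi> \<open>v \<notin> U\<close> \<open>{v, v} \<notin> E\<close> z(2) z_root z_edge]
  show ?thesis by blast
qed

lemma rooted_shadow_embedding_of_forest:
  assumes acyclic: "\<not> has_cycle E" and E2: "\<forall>g\<in>E. card g = 2"
    and full: "full m H" and xy: "x \<noteq> y" "link H {x, y} \<noteq> {}"
    and "finite U" "card U < m"
  shows "\<exists>\<phi>. rooted_shadow_embedding H y E U \<phi>"
  using \<open>finite U\<close> \<open>card U < m\<close>
proof (induction "card U" arbitrary: U rule: less_induct)
  case less
  show ?case
  proof (cases "U = {}")
    case True
    have "rooted_shadow_embedding H y E {} (\<lambda>_. y)" by (simp add: rooted_shadow_embedding_def)
    then show ?thesis using True by blast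
  next
    case False
    obtain v where v: "v \<in> U" "\<forall>w1\<in>U. \<forall>w2\<in>U. {v, w1} \<in> E \<longrightarrow> {v, w2} \<in> E \<longrightarrow> w1 = w2"
      using acyclic_ex_vertex_le_one_neighbour[OF acyclic E2 less.prems(1) False] by blast
    have fin: "finite (U - {v})" and v_new: "v \<notin> U - {v}" using less.prems(1) by auto
    have card_U: "card U = Suc (card (U - {v}))"
      using card.remove[OF less.prems(1) v(1)] .
    then obtain \<phi> where \<phi>: "rooted_shadow_embedding H y E (U - {v}) \<phi>"
      using less.hyps[OF _ fin] less.prems(2) by auto
    have no_loop: "{v, v} \<notin> E"
    proof
      assume "{v, v} \<in> E"
      then have "card {v, v} = 2" using E2 by blast
      then show False by simp
    qed
    have "Suc (card (U - {v})) < m" using card_U less.prems(2) by simp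
    moreover have "\<And>w1 w2. w1 \<in> U - {v} \<Longrightarrow> w2 \<in> U - {v} \<Longrightarrow> {v, w1} \<in> E \<Longrightarrow> {v, w2} \<in> E \<Longrightarrow> w1 = w2"
      using v(2) by blast
    ultimately obtain \<psi> where "rooted_shadow_embedding H y E (insert v (U - {v})) \<psi>"
      using rooted_shadow_embedding_insert[OF full xy \<phi> fin v_new _ no_loop] by blast
    moreover have "insert v (U - {v}) = U" using v(1) by blast
    ultimately show ?thesis by auto
  qed
qed

lemma rooted_shadow_embedding_add_root:
  assumes \<phi>: "rooted_shadow_embedding H y E U \<phi>" and "b \<notin> U"
  shows "inj_on (\<phi>(b := y)) (insert b U)"
    and "\<And>u w. u \<in> insert b U \<Longrightarrow> w \<in> insert b U \<Longrightarrow> u \<noteq> w \<Longrightarrow> {u, w} \<in> E \<or> b \<in> {u, w} \<Longrightarrow>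
      link H {(\<phi>(b := y)) u, (\<phi>(b := y)) w} \<noteq> {}"
proof -
  have \<phi>_root: "\<And>u. u \<in> U \<Longrightarrow> \<phi> u \<noteq> y \<and> link H {\<phi> u, y} \<noteq> {}"
    using \<phi> by (auto simp: rooted_shadow_embedding_def)
  then have "y \<notin> \<phi> ` U" by auto
  moreover have "inj_on \<phi> U" using \<phi> by (simp add: rooted_shadow_embedding_def)
  ultimately show "inj_on (\<phi>(b := y)) (insert b U)"
    using \<open>b \<notin> U\<close> by (auto simp: inj_on_insert inj_on_fun_updI)
  fix u w assume "u \<in> insert b U" "w \<in> insert b U" "u \<noteq> w" "{u, w} \<in> E \<or> b \<in> {u, w}"
  then consider "u = b" "w \<in> U" | "w = b" "u \<in> U" | "u \<in> U" "w \<in> U" "{u, w} \<in> E"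
    by auto
  then show "link H {(\<phi>(b := y)) u, (\<phi>(b := y)) w} \<noteq> {}"
  proof cases
    case 1
    then show ?thesis using \<phi>_root[of w] \<open>b \<notin> U\<close> by (auto simp: insert_commute)
  next
    case 2
    then show ?thesis using \<phi>_root[of u] \<open>b \<notin> U\<close> by auto
  next
    case 3
    then show ?thesis using \<phi> \<open>b \<notin> U\<close> by (auto simp: rooted_shadow_embedding_def)
  qed
qed

lemma shadow_embedding_of_forest_plus_vertex:
  assumes full: "full m H" and H3: "\<forall>h\<in>H. card h = 3" and "H \<noteq> {}"
    and acyclic: "\<not> has_cycle E" and E2: "\<forall>g\<in>E. card g = 2"
    and "finite VF" "b \<in> VF" "card VF \<le> m"
    and EF: "\<And>g. g \<in> EF \<Longrightarrow> card g = 2 \<and> g \<subseteq> VF \<and> (g \<in> E \<or> b \<in> g)"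
  shows "\<exists>\<Phi>. inj_on \<Phi> VF \<and> \<Phi> ` VF \<subseteq> \<Union>H \<and> (\<forall>g\<in>EF. link H (\<Phi> ` g) \<noteq> {})"
proof -
  obtain x y z where xyz: "{x, y, z} \<in> H" "x \<noteq> y"
    using \<open>H \<noteq> {}\<close> H3 by (metis card_3_iff ex_in_conv)
  then have "link H {x, y} \<noteq> {}" by (auto simp: mem_link_pair)
  define U where "U = VF - {b}"
  have "finite U" "card U < m"
    using \<open>finite VF\<close> \<open>b \<in> VF\<close> \<open>card VF \<le> m\<close> card_Diff1_less[of VF b] by (auto simp: U_def)
  then obtain \<phi> where \<phi>: "rooted_shadow_embedding H y E U \<phi>"
    using rooted_shadow_embedding_of_forest[OF acyclic E2 full xyz(2) \<open>link H {x, y} \<noteq> {}\<close>] by blast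
  have VF: "VF = insert b U" and "b \<notin> U" using \<open>b \<in> VF\<close> by (auto simp: U_def)
  show ?thesis
  proof (intro exI[of _ "\<phi>(b := y)"] conjI ballI)
    show "inj_on (\<phi>(b := y)) VF"
      unfolding VF using rooted_shadow_embedding_add_root(1)[OF \<phi> \<open>b \<notin> U\<close>] .
    have "\<phi> ` U \<subseteq> \<Union>H"
      using \<phi> mem_Union_if_link_ne by (fastforce simp: rooted_shadow_embedding_def)
    moreover have "y \<in> \<Union>H" using xyz(1) by blast
    moreover have "\<phi>(b := y) ` VF = insert y (\<phi> ` U)" using \<open>b \<notin> U\<close> by (auto simp: VF)
    ultimately show "\<phi>(b := y) ` VF \<subseteq> \<Union>H" by simp
  next
    fix g assume "g \<in> EF"
    then obtain u w where uw: "g = {u, w}" "u \<noteq> w" "u \<in> VF" "w \<in> VF" "{u, w} \<in> E \<or> b \<in> {u, w}"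
      using EF by (metis card_2_iff insert_subset)
    have "\<phi>(b := y) ` g = {(\<phi>(b := y)) u, (\<phi>(b := y)) w}"
      by (simp only: uw(1) image_insert image_empty)
    moreover have "link H {(\<phi>(b := y)) u, (\<phi>(b := y)) w} \<noteq> {}"
      using rooted_shadow_embedding_add_root(2)[OF \<phi> \<open>b \<notin> U\<close>] uw(2-5) unfolding VF by blast
    ultimately show "link H (\<phi>(b := y) ` g) \<noteq> {}" by simp
  qed
qed

section \<open>Expansions\<close>

lemma contains_expansion_if_codegrees_large:
  assumes "finite VF" "finite EF" "inj_on \<Phi> VF" "\<Phi> ` VF \<subseteq> VH" "\<Union>H \<subseteq> VH"
    and codegree: "\<forall>g\<in>EF. card VF + card EF \<le> card (link H (\<Phi> ` g))"
  shows "contains_copy VH H (exp3_vertices VF EF) (exp3_edges EF)"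
proof -
  have "\<forall>g\<in>EF. card EF + card (\<Phi> ` VF) \<le> card (link H (\<Phi> ` g))"
    using codegree card_image[OF \<open>inj_on \<Phi> VF\<close>] by (simp add: add.commute)
  from ex_inj_choice_avoiding[OF \<open>finite EF\<close> finite_imageI[OF \<open>finite VF\<close>] this]
  obtain c where c_inj: "inj_on c EF"
    and c: "\<forall>g\<in>EF. c g \<in> link H (\<Phi> ` g) \<and> c g \<notin> \<Phi> ` VF"
    by blast
  then have c_edge: "insert (c g) (\<Phi> ` g) \<in> H" if "g \<in> EF" for g
    using that by (simp add: link_def)
  have "\<Phi> ` VF \<inter> c ` EF = {}" using c by (fastforce simp: image_iff)
  moreover have "c ` EF \<subseteq> VH" using c_edge \<open>\<Union>H \<subseteq> VH\<close> by blast
  ultimately show ?thesis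
    unfolding contains_copy_def
  proof (intro exI[of _ "case_sum \<Phi> c"] conjI)
    show "inj_on (case_sum \<Phi> c) (exp3_vertices VF EF)"
      unfolding exp3_vertices_def using \<open>inj_on \<Phi> VF\<close> c_inj \<open>\<Phi> ` VF \<inter> c ` EF = {}\<close>
      by (rule inj_on_case_sum)
    show "case_sum \<Phi> c ` exp3_vertices VF EF \<subseteq> VH"
      unfolding exp3_vertices_def image_Un image_image
      using \<open>\<Phi> ` VF \<subseteq> VH\<close> \<open>c ` EF \<subseteq> VH\<close> by simp
    show "\<forall>g'\<in>exp3_edges EF. case_sum \<Phi> c ` g' \<in> H"
      using c_edge by (auto simp: exp3_edges_def image_image)
  qed
qed

lemma contains_copy_mono:
  assumes "contains_copy VH H VG G" "H \<subseteq> H'"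
  shows "contains_copy VH H' VG G"
  using assms unfolding contains_copy_def by (meson subsetD)

lemma full_contains_expansion:
  assumes full: "full m H" and H3: "\<forall>h\<in>H. card h = 3" and "H \<noteq> {}" "\<Union>H \<subseteq> VH"
    and acyclic: "\<not> has_cycle E" and E2: "\<forall>g\<in>E. card g = 2"
    and "finite VF" "finite EF" "b \<in> VF" "card VF + card EF \<le> m"
    and EF: "\<And>g. g \<in> EF \<Longrightarrow> card g = 2 \<and> g \<subseteq> VF \<and> (g \<in> E \<or> b \<in> g)"
  shows "contains_copy VH H (exp3_vertices VF EF) (exp3_edges EF)"
proof -
  have "card VF \<le> m" using \<open>card VF + card EF \<le> m\<close> by simp
  then obtain \<Phi> where \<Phi>: "inj_on \<Phi> VF" "\<Phi> ` VF \<subseteq> \<Union>H" "\<forall>g\<in>EF. link H (\<Phi> ` g) \<noteq> {}"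
    using shadow_embedding_of_forest_plus_vertex[OF full H3 \<open>H \<noteq> {}\<close> acyclic E2 \<open>finite VF\<close>
        \<open>b \<in> VF\<close> _ EF]
    by blast
  have codegree: "\<forall>g\<in>EF. card VF + card EF \<le> card (link H (\<Phi> ` g))"
  proof
    fix g assume "g \<in> EF"
    then have "card (\<Phi> ` g) = 2" using EF card_image[OF inj_on_subset[OF \<Phi>(1)]] by metis
    then show "card VF + card EF \<le> card (link H (\<Phi> ` g))"
      using full_link_card[OF full] \<Phi>(3) \<open>g \<in> EF\<close> \<open>card VF + card EF \<le> m\<close> by fastforce
  qed
  have "\<Phi> ` VF \<subseteq> VH" using \<Phi>(2) \<open>\<Union>H \<subseteq> VH\<close> by blast
  from contains_expansion_if_codegrees_large[OF \<open>finite VF\<close> \<open>finite EF\<close> \<Phi>(1) this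
      \<open>\<Union>H \<subseteq> VH\<close> codegree]
  show ?thesis .
qed

lemma augmentation_edges:
  assumes "is_tree V E" "is_augmentation V E VF EF"
  shows "\<exists>b\<in>VF. \<forall>g\<in>EF. card g = 2 \<and> g \<subseteq> VF \<and> (g \<in> E \<or> b \<in> g)"
proof -
  obtain a b where "VF = V \<union> {a, b}" "EF = insert {a, b} E" "card {a, b} = 2"
    using assms(2) unfolding is_augmentation_def by (metis card_2_iff)
  moreover have "\<forall>g\<in>E. g \<subseteq> V \<and> card g = 2"
    using assms(1) by (auto simp: is_tree_def graph_on_def)
  ultimately show ?thesis by blast
qed

lemma augmentation_size:
  assumes "is_tree V E" "is_augmentation V E VF EF"
  shows "finite VF" "finite EF" "card VF + card EF \<le> 6 * (card E + 1)"
proof -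
  have "graph_on V E" "connected_graph V E"
    using assms(1) by (auto simp: is_tree_def)
  then have "finite V" "E \<subseteq> Pow V"
    by (auto simp: graph_on_def)
  then have "finite E" by (simp add: finite_subset)
  obtain e where e: "card e = 2" "e \<notin> E" "VF = V \<union> e" "EF = insert e E"
    using assms(2) unfolding is_augmentation_def by blast
  have "finite e" using e(1) by (intro card_ge_0_finite) simp
  then show "finite VF" "finite EF" using \<open>finite V\<close> \<open>finite E\<close> e(3,4) by simp_all
  have "card V \<le> 2 * card E + 1"
    using connected_graph_card_le \<open>graph_on V E\<close> \<open>connected_graph V E\<close> .
  moreover have "card VF \<le> card V + 2" using e(1,3) card_Un_le[of V e] by simp
  moreover have "card EF = card E + 1" using e(2,4) \<open>finite E\<close> by simp
  ultimately show "card VF + card EF \<le> 6 * (card E + 1)" by simp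
qed

lemma ex3_le_if_dense_contains:
  assumes "G \<noteq> {}"
    and dense: "\<And>H. three_graph_on n H \<Longrightarrow> B < card H \<Longrightarrow> contains_copy {..<n} H VG G"
  shows "ex3 n VG G \<le> B"
proof -
  define S where "S = {card H |H. three_graph_on n H \<and> \<not> contains_copy {..<n} H VG G}"
  have "S \<subseteq> {..B}"
  proof
    fix s assume "s \<in> S"
    then obtain H where "s = card H" "three_graph_on n H" "\<not> contains_copy {..<n} H VG G"
      unfolding S_def by blast
    then show "s \<in> {..B}" using dense not_less by auto
  qed
  moreover have "0 \<in> S"
  proof -
    have "three_graph_on n {}" by (simp add: three_graph_on_def)
    moreover have "\<not> contains_copy {..<n} {} VG G"
      using \<open>G \<noteq> {}\<close> by (simp add: contains_copy_def)
    ultimately show ?thesis unfolding S_def by force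
  qed
  ultimately have "Max S \<le> B"
    using Max_le_iff[of S B] finite_subset[OF _ finite_atMost] by blast
  then show ?thesis unfolding ex3_def S_def .
qed

lemma contains_expansion_of_augmentation:
  assumes tree: "is_tree V E" and aug: "is_augmentation V E VF EF"
    and H: "three_graph_on n H" and many: "3 * (card E + 1) * n ^ 2 < card H"
  shows "contains_copy {..<n} H (exp3_vertices VF EF) (exp3_edges EF)"
proof -
  define m where "m = 6 * (card E + 1)"
  have "H \<subseteq> Pow {..<n}" and H3: "\<forall>h\<in>H. card h = 3"
    using H unfolding three_graph_on_def by auto
  then have "finite H" by (simp add: finite_subset)
  obtain H' where H': "H' \<subseteq> H" "full m H'" "card H \<le> card H' + m * card (shadow H)"
    using ex_full_subgraph[OF \<open>finite H\<close> H3] by blast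
  have "m * card (shadow H) \<le> m * (n choose 2)"
    using card_shadow_le[OF H] by simp
  also have "\<dots> = 3 * (card E + 1) * (2 * (n choose 2))" by (simp add: m_def)
  also have "\<dots> \<le> 3 * (card E + 1) * n ^ 2"
    using double_choose_two_le[of n] by (rule mult_le_mono2)
  finally have "H' \<noteq> {}" using H'(3) many by auto
  have H'3: "\<forall>h\<in>H'. card h = 3" using H3 H'(1) by blast
  have "\<Union>H' \<subseteq> {..<n}" using \<open>H \<subseteq> Pow {..<n}\<close> H'(1) by blast
  have acyclic: "\<not> has_cycle E" and E2: "\<forall>g\<in>E. card g = 2"
    using tree by (auto simp: is_tree_def graph_on_def)
  obtain b where "b \<in> VF" and EF: "\<forall>g\<in>EF. card g = 2 \<and> g \<subseteq> VF \<and> (g \<in> E \<or> b \<in> g)"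
    using augmentation_edges[OF tree aug] by blast
  note size = augmentation_size[OF tree aug, folded m_def]
  have "contains_copy {..<n} H' (exp3_vertices VF EF) (exp3_edges EF)"
    using full_contains_expansion[OF H'(2) H'3 \<open>H' \<noteq> {}\<close> \<open>\<Union>H' \<subseteq> {..<n}\<close> acyclic E2 size(1,2)
        \<open>b \<in> VF\<close> size(3)] EF by blast
  then show ?thesis using H'(1) by (rule contains_copy_mono)
qed

theorem proposition4p1:
  fixes V VF :: "'a set" and E EF :: "'a set set"
  assumes "is_tree V E"
    and "is_augmentation V E VF EF"
  shows "\<exists>N. \<forall>n\<ge>N. ex3 n (exp3_vertices VF EF) (exp3_edges EF) \<le> 3 * (card E + 1) * n ^ 2"
proof (intro exI[of _ 0] allI impI)
  fix n :: nat
  have "exp3_edges EF \<noteq> {}"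
    using assms(2) unfolding is_augmentation_def exp3_edges_def by auto
  then show "ex3 n (exp3_vertices VF EF) (exp3_edges EF) \<le> 3 * (card E + 1) * n ^ 2"
    using ex3_le_if_dense_contains contains_expansion_of_augmentation[OF assms] by blast
qed

end
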